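(* Each of the sets $\{1,2,3\}$, $\{1,2,3,4\}$, $\{1,2,3,4,5\}$, $\{1,2,3,4,6\}$, $\{1,2,3,4,5,6\}$ belongs to $\mathcal{I}_1$.
   Context: For a summable sequence $\mathbf{x}=(x_n)$ of positive reals, $\mathcal{A}(\mathbf{x})=\{\sum_{n\in A}x_n: A\subseteq\mathbb{N}\}$ is its achievement set and its cardinal function $f$ assigns to $x\in\mathcal{A}(\mathbf{x})$ the cardinality (a positive integer, $\omega$, or $\mathfrak{c}$) of $\{(\varepsilon_n)\in\{0,1\}^{\mathbb{N}}:\sum\varepsilon_nx_n=x\}$. $\mathcal{I}_1$ is the family of ranges of cardinal functions of such sequences whose achievement set is a single closed interval. *)

theory Defs
  imports "HOL-Analysis.Analysis"
begin

datatype cardval = Fin nat | Omega | Continuum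

definition subsum :: "(nat \<Rightarrow> real) \<Rightarrow> nat set \<Rightarrow> real" where
  "subsum x A = (\<Sum>n. if n \<in> A then x n else 0)"

definition achievement_set :: "(nat \<Rightarrow> real) \<Rightarrow> real set" where
  "achievement_set x = {subsum x A | A. A \<subseteq> UNIV}"

text \<open>Cardinality of a set of 0-1 sequences (identified with subsets of nat).
  These sets are closed in Cantor space, so an uncountable one has size continuum.\<close>
definition cardval_of :: "nat set set \<Rightarrow> cardval" where
  "cardval_of S = (if finite S then Fin (card S) else if countable S then Omega else Continuum)"

definition cardinal_function :: "(nat \<Rightarrow> real) \<Rightarrow> real \<Rightarrow> cardval" where
  "cardinal_function x y = cardval_of {A. subsum x A = y}"

definition I1 :: "cardval set set" where
  "I1 = {R. \<exists>x :: nat \<Rightarrow> real. (\<forall>n. x n > 0) \<and> summable x \<and>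
            (\<exists>a b. a \<le> b \<and> achievement_set x = {a..b}) \<and>
            R = cardinal_function x ` achievement_set x}"

end

theory Submission
  imports Defs
begin

text \<open>
  Append to a finite prefix p of positive reals the binary weights 1/2, 1/4, 1/8, ... .
  The tail represents every t in [0,1]: twice if t is a terminating binary fraction in (0,1)
  (one expansion ending in zeros, one in ones), once otherwise. So the cardinal function of
  the whole sequence at y is the finite number obtained by adding up these representation
  counts at y - (sum of p over F), for F running over the sets of prefix indices. For the
  prefixes [1/3], [1/2], [1/2, 2/3], [1/2, 1/2] and [3/4, 1/2] the achievement set is an interval
  and these counts take exactly the required values; the upper bounds rest on the fact that
  two terminating fractions never differ by a non-dyadic number such as 1/3, 2/3 or 1/6.
\<close>

section \<open>Subsums of the binary weights\<close>

definition binary_weight :: "nat \<Rightarrow> real" where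
  "binary_weight n = (1/2)^Suc n"

abbreviation bsum :: "nat set \<Rightarrow> real" where
  "bsum B \<equiv> subsum binary_weight B"

lemma binary_weight_pos: "binary_weight n > 0"
  by (simp add: binary_weight_def)

lemma summable_binary_weight: "summable binary_weight"
  using power_half_series unfolding binary_weight_def by (simp add: sums_summable)

lemma summable_bsum_terms: "summable (\<lambda>n. if n \<in> B then binary_weight n else 0)"
  by (rule summable_comparison_test'[OF summable_binary_weight, of 0])
     (auto simp: binary_weight_pos less_imp_le)

lemma bsum_UNIV: "bsum UNIV = 1"
  unfolding subsum_def binary_weight_def using sums_unique[OF power_half_series, symmetric] by simp

lemma bsum_nonneg: "bsum B \<ge> 0"
  unfolding subsum_def
  by (rule suminf_nonneg[OF summable_bsum_terms]) (auto simp: binary_weight_pos less_imp_le)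

lemma bsum_Un_disjoint: "B \<inter> C = {} \<Longrightarrow> bsum (B \<union> C) = bsum B + bsum C"
proof -
  assume "B \<inter> C = {}"
  then have "(\<lambda>n. if n \<in> B \<union> C then binary_weight n else 0) =
      (\<lambda>n. (if n \<in> B then binary_weight n else 0) + (if n \<in> C then binary_weight n else 0))"
    by (auto simp: fun_eq_iff)
  then show ?thesis
    unfolding subsum_def using suminf_add[OF summable_bsum_terms summable_bsum_terms, of B C] by simp
qed

lemma bsum_empty: "bsum {} = 0"
  by (simp add: subsum_def)

lemma bsum_pos: "B \<noteq> {} \<Longrightarrow> 0 < bsum B"
proof -
  assume "B \<noteq> {}"
  then obtain i where "i \<in> B" by auto
  then show "0 < bsum B" unfolding subsum_def
    by (intro suminf_pos2[OF summable_bsum_terms, of _ i]) (auto simp: binary_weight_pos less_imp_le)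
qed

lemma bsum_eq_0_imp_empty: "bsum B = 0 \<Longrightarrow> B = {}"
  using bsum_pos[of B] by auto

lemma bsum_mono: "B \<subseteq> C \<Longrightarrow> bsum B \<le> bsum C"
  using bsum_Un_disjoint[of B "C - B"] bsum_nonneg[of "C - B"] by (simp add: Un_absorb1)

lemma bsum_le_1: "bsum B \<le> 1"
  using bsum_mono[of B UNIV] bsum_UNIV by simp

lemma bsum_finite: "finite F \<Longrightarrow> bsum F = (\<Sum>n\<in>F. binary_weight n)"
  unfolding subsum_def by (subst suminf_finite[of F]) auto

lemma bsum_singleton: "bsum {m} = binary_weight m"
  using bsum_finite[of "{m}"] by simp

lemma bsum_greaterThan: "bsum {m<..} = binary_weight m"
proof -
  have partial: "(\<Sum>n\<le>k. binary_weight n) = 1 - (1/2)^Suc k" for k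
    by (induction k) (auto simp: binary_weight_def)
  have "UNIV = {..m} \<union> {m<..}" "{..m} \<inter> {m<..} = {}" by auto
  then have "bsum UNIV = bsum {..m} + bsum {m<..}" using bsum_Un_disjoint by metis
  then show ?thesis using bsum_UNIV bsum_finite[of "{..m}"] partial[of m] by (simp add: binary_weight_def)
qed

lemma bsum_eq_greaterThan: "C \<subseteq> {m<..} \<Longrightarrow> bsum C = binary_weight m \<Longrightarrow> C = {m<..}"
proof -
  assume C: "C \<subseteq> {m<..}" "bsum C = binary_weight m"
  then have "bsum {m<..} = bsum C + bsum ({m<..} - C)"
    using bsum_Un_disjoint[of C "{m<..} - C"] by (simp add: Un_absorb1)
  then have "{m<..} - C = {}" using C bsum_greaterThan by (intro bsum_eq_0_imp_empty) simp
  with C show ?thesis by auto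
qed

text \<open>
  Two distinct sets with the same sum first differ at some \<open>m\<close>; since \<open>binary_weight m\<close> is
  the sum of all later weights, the set containing \<open>m\<close> stops there and the other contains
  everything after \<open>m\<close>.
\<close>

lemma bsum_eq_first_difference:
  assumes eq: "bsum B = bsum C" and m: "m \<in> B" "m \<notin> C"
    and below: "\<forall>n<m. n \<in> B \<longleftrightarrow> n \<in> C"
  shows "B \<subseteq> {..m}" and "{m<..} \<subseteq> C"
proof -
  define L where "L = B \<inter> {..<m}"
  define B' where "B' = B \<inter> {m<..}"
  define C' where "C' = C \<inter> {m<..}"
  have partition: "X = (X \<inter> {..<m}) \<union> ((X \<inter> {m}) \<union> (X \<inter> {m<..}))" for X
    by auto
  have B: "B = L \<union> ({m} \<union> B')" unfolding L_def B'_def using m partition[of B] by auto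
  have C: "C = L \<union> C'" unfolding L_def C'_def using m below partition[of C] by auto
  have disjoint: "L \<inter> ({m} \<union> B') = {}" "{m} \<inter> B' = {}" "L \<inter> C' = {}"
    unfolding L_def B'_def C'_def by auto
  have sums: "bsum B = bsum L + (binary_weight m + bsum B')" "bsum C = bsum L + bsum C'"
    using B C bsum_Un_disjoint[OF disjoint(1)] bsum_Un_disjoint[OF disjoint(2)]
      bsum_Un_disjoint[OF disjoint(3)] bsum_singleton[of m] by simp_all
  have tail: "C' \<subseteq> {m<..}" unfolding C'_def by blast
  then have "bsum C' \<le> binary_weight m" using bsum_mono[OF tail] bsum_greaterThan[of m] by linarith
  then have "bsum B' = 0" "bsum C' = binary_weight m" using sums eq bsum_nonneg[of B'] by simp_all
  then have "B' = {}" "C' = {m<..}"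
    using bsum_eq_0_imp_empty tail bsum_eq_greaterThan by blast+
  then show "B \<subseteq> {..m}" "{m<..} \<subseteq> C" using B unfolding L_def C'_def by auto
qed

lemma bsum_eq_imp_finite_iff_infinite:
  assumes eq: "bsum B = bsum C" and ne: "B \<noteq> C"
  shows "finite B \<longleftrightarrow> infinite C"
proof -
  obtain m where m: "(m \<in> B) \<noteq> (m \<in> C)" and below: "\<forall>n<m. n \<in> B \<longleftrightarrow> n \<in> C"
    using ne exists_least_iff[of "\<lambda>n. (n \<in> B) \<noteq> (n \<in> C)"] by blast
  have stops_finite: "X \<subseteq> {..m} \<Longrightarrow> finite X" for X
    using finite_subset by blast
  have tail_infinite: "{m<..} \<subseteq> X \<Longrightarrow> infinite X" for X
    using infinite_Ioi infinite_super by blast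
  show ?thesis
  proof (cases "m \<in> B")
    case True
    with m have "m \<notin> C" by simp
    from bsum_eq_first_difference[OF eq True this below] show ?thesis
      using stops_finite tail_infinite by blast
  next
    case False
    with m have "m \<in> C" by simp
    from bsum_eq_first_difference[OF eq[symmetric] this False] below show ?thesis
      using stops_finite tail_infinite by auto
  qed
qed

lemma floor_double_cases: "\<lfloor>2 * x\<rfloor> = 2 * \<lfloor>x\<rfloor> \<or> \<lfloor>2 * x\<rfloor> = 2 * \<lfloor>x::real\<rfloor> + 1"
proof -
  have x: "real_of_int \<lfloor>x\<rfloor> \<le> x" "x < real_of_int \<lfloor>x\<rfloor> + 1" by linarith+
  have "2 * \<lfloor>x\<rfloor> \<le> \<lfloor>2 * x\<rfloor>" using x by (simp add: le_floor_iff)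
  moreover have "\<lfloor>2 * x\<rfloor> < 2 * \<lfloor>x\<rfloor> + 2" using x by (simp add: floor_less_iff) linarith
  ultimately show ?thesis by linarith
qed

text \<open>Every \<open>t \<in> [0,1)\<close> is represented by its binary expansion, read off from \<open>\<lfloor>t 2\<^sup>n\<rfloor>\<close>.\<close>

lemma bsum_surj_less_1:
  assumes "0 \<le> t" "t < 1"
  shows "\<exists>B. bsum B = t"
proof -
  define a where "a n = \<lfloor>t * 2^n\<rfloor>" for n
  define B where "B = {n. a (Suc n) = 2 * a n + 1}"
  define f where "f n = (if n \<in> B then binary_weight n else 0)" for n
  have a0: "a 0 = 0" unfolding a_def using assms by (simp add: floor_eq_iff)
  have digit: "a (Suc n) = 2 * a n \<or> a (Suc n) = 2 * a n + 1" for n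
    using floor_double_cases[of "t * 2^n"] unfolding a_def by (simp add: mult_ac)
  have partial: "(\<Sum>k<n. f k) = a n / 2^n" for n
  proof (induction n)
    case 0 then show ?case by (simp add: a0)
  next
    case (Suc n)
    then have "(\<Sum>k<Suc n. f k) = a n / 2^n + f n" by simp
    also have "\<dots> = a (Suc n) / 2^Suc n"
      using digit[of n] unfolding f_def B_def binary_weight_def by (auto simp: field_simps)
    finally show ?case .
  qed
  have lower: "t - (1/2)^n \<le> a n / 2^n" for n
  proof -
    have "t * 2^n - 1 \<le> a n" unfolding a_def by linarith
    then have "(t * 2^n - 1) / 2^n \<le> a n / 2^n" by (simp add: divide_right_mono)
    then show ?thesis by (simp add: field_simps power_divide)
  qed
  have upper: "a n / 2^n \<le> t" for n
  proof -
    have "a n \<le> t * 2^n" unfolding a_def by linarith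
    then show ?thesis by (simp add: field_simps)
  qed
  have "(\<lambda>n. t - (1/2::real)^n) \<longlonglongrightarrow> t"
    using tendsto_diff[OF tendsto_const LIMSEQ_power_zero[of "1/2::real"], of t] by simp
  then have "(\<lambda>n. a n / 2^n) \<longlonglongrightarrow> t"
    by (rule real_tendsto_sandwich[OF _ _ _ tendsto_const, rotated 2]) (simp_all add: lower upper always_eventually)
  then have "f sums t" unfolding sums_def using partial by simp
  then have "bsum B = t" unfolding subsum_def f_def by (simp add: sums_unique[symmetric])
  then show ?thesis by blast
qed

lemma bsum_surj: "0 \<le> t \<Longrightarrow> t \<le> 1 \<Longrightarrow> \<exists>B. bsum B = t"
  using bsum_surj_less_1[of t] bsum_UNIV by (cases "t = 1") auto

section \<open>Counting binary representations\<close>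

definition terminating :: "real set" where
  "terminating = {bsum F | F. finite F \<and> F \<noteq> {}}"

definition binary_reps :: "real \<Rightarrow> nat" where
  "binary_reps t = (if t \<in> terminating then 2 else if 0 \<le> t \<and> t \<le> 1 then 1 else 0)"

lemma terminating_bounds: "t \<in> terminating \<Longrightarrow> 0 < t \<and> t < 1"
proof -
  assume "t \<in> terminating"
  then obtain F where F: "finite F" "F \<noteq> {}" "t = bsum F" unfolding terminating_def by blast
  have "- F \<noteq> {}" using F(1) by (metis Compl_empty_eq double_compl infinite_UNIV_nat)
  then have "0 < bsum F" "0 < bsum (- F)" using F(2) bsum_pos by simp_all
  moreover have "bsum F + bsum (- F) = 1"
    using bsum_Un_disjoint[of F "- F"] bsum_UNIV by (simp add: Compl_partition)
  ultimately show ?thesis using F(3) by simp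
qed

lemma terminating_intro: "finite F \<Longrightarrow> F \<noteq> {} \<Longrightarrow> (\<Sum>n\<in>F. binary_weight n) = t \<Longrightarrow> t \<in> terminating"
  unfolding terminating_def using bsum_finite by auto

lemma bsum_trailing_ones:
  assumes "finite F" "F \<noteq> {}"
  shows "bsum ((F - {Max F}) \<union> {Max F<..}) = bsum F"
proof -
  let ?M = "Max F"
  have "x \<le> ?M" if "x \<in> F" for x using assms that by simp
  then have "(F - {?M}) \<inter> {?M<..} = {}" by fastforce
  then have "bsum ((F - {?M}) \<union> {?M<..}) = bsum (F - {?M}) + binary_weight ?M"
    using bsum_Un_disjoint bsum_greaterThan by simp
  also have "\<dots> = bsum F"
    using bsum_Un_disjoint[of "{?M}" "F - {?M}"] bsum_singleton[of ?M] insert_Diff[OF Max_in[OF assms]]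
    by simp
  finally show ?thesis .
qed

lemma bsum_fibre_terminating:
  assumes "t \<in> terminating"
  shows "\<exists>F P. F \<noteq> P \<and> {B. bsum B = t} = {F, P}"
proof -
  obtain F where F: "finite F" "F \<noteq> {}" "t = bsum F" using assms unfolding terminating_def by blast
  define P where "P = (F - {Max F}) \<union> {Max F<..}"
  have P: "bsum P = t" "infinite P"
    using bsum_trailing_ones[OF F(1,2)] F(3) infinite_Ioi unfolding P_def by auto
  have "{B. bsum B = t} = {F, P}"
  proof (intro equalityI subsetI)
    fix B assume "B \<in> {B. bsum B = t}"
    then have "bsum B = bsum F" "bsum B = bsum P" using F(3) P(1) by simp_all
    then have "B \<noteq> F \<Longrightarrow> infinite B" "B \<noteq> P \<Longrightarrow> finite B"
      using bsum_eq_imp_finite_iff_infinite[of B F] bsum_eq_imp_finite_iff_infinite[of B P] F(1) P(2)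
      by simp_all
    then show "B \<in> {F, P}" by auto
  qed (use F P in auto)
  moreover have "F \<noteq> P" using F(1) P(2) by auto
  ultimately show ?thesis by blast
qed

lemma bsum_fibre_nonterminating:
  assumes "t \<notin> terminating" "0 \<le> t" "t \<le> 1"
  shows "\<exists>B0. {B. bsum B = t} = {B0}"
proof -
  obtain B0 where B0: "bsum B0 = t" using bsum_surj assms(2,3) by blast
  have finite_rep_zero: "t = 0" if "finite X" "bsum X = t" for X
  proof -
    have "X = {}" using assms(1) that unfolding terminating_def by blast
    with \<open>bsum X = t\<close> show "t = 0" by (simp add: bsum_empty)
  qed
  have "B = B0" if "bsum B = t" for B
  proof (rule ccontr)
    assume "B \<noteq> B0"
    then have "finite B \<or> finite B0"
      using bsum_eq_imp_finite_iff_infinite[of B B0] that B0 by auto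
    then have "t = 0" using finite_rep_zero that B0 by blast
    then show False
      using \<open>B \<noteq> B0\<close> that B0 bsum_eq_0_imp_empty[of B] bsum_eq_0_imp_empty[of B0] by simp
  qed
  then show ?thesis using B0 by blast
qed

lemma card_bsum_fibre: "finite {B. bsum B = t} \<and> card {B. bsum B = t} = binary_reps t"
proof -
  consider "t \<in> terminating" | "t \<notin> terminating" "0 \<le> t" "t \<le> 1" | "t < 0 \<or> 1 < t"
    by (cases "t \<in> terminating"; cases "t < 0 \<or> 1 < t") auto
  then show ?thesis
  proof cases
    case 1
    obtain F P where "F \<noteq> P" and fibre: "{B. bsum B = t} = {F, P}"
      using bsum_fibre_terminating[OF 1] by iprover
    then show ?thesis unfolding fibre using 1 by (simp add: binary_reps_def)
  next
    case 2
    obtain B0 where fibre: "{B. bsum B = t} = {B0}" using bsum_fibre_nonterminating[OF 2] by iprover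
    show ?thesis unfolding fibre using 2 by (simp add: binary_reps_def)
  next
    case 3
    then have "t \<notin> terminating" using terminating_bounds[of t] by auto
    moreover have "bsum B \<noteq> t" for B using 3 bsum_nonneg[of B] bsum_le_1[of B] by auto
    then have fibre: "{B. bsum B = t} = {}" by blast
    ultimately show ?thesis unfolding fibre using 3 by (auto simp: binary_reps_def)
  qed
qed

lemma binary_reps_pos_iff: "0 < binary_reps t \<longleftrightarrow> 0 \<le> t \<and> t \<le> 1"
  using terminating_bounds[of t] unfolding binary_reps_def by auto

lemma binary_reps_le_2: "binary_reps t \<le> 2"
  by (simp add: binary_reps_def)

lemma binary_reps_le_1: "t \<notin> terminating \<Longrightarrow> binary_reps t \<le> 1"
  by (simp add: binary_reps_def)

lemma binary_reps_ge_1: "0 \<le> t \<Longrightarrow> t \<le> 1 \<Longrightarrow> 1 \<le> binary_reps t"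
  using binary_reps_pos_iff[of t] by simp

lemma binary_reps_terminating: "t \<in> terminating \<Longrightarrow> binary_reps t = 2"
  by (simp add: binary_reps_def)

lemma binary_reps_nonterminating: "t \<notin> terminating \<Longrightarrow> 0 \<le> t \<Longrightarrow> t \<le> 1 \<Longrightarrow> binary_reps t = 1"
  by (simp add: binary_reps_def)

lemma binary_reps_outside: "t < 0 \<or> 1 < t \<Longrightarrow> binary_reps t = 0"
  using binary_reps_pos_iff[of t] by auto

lemma zero_one_notin_terminating: "(0::real) \<notin> terminating" "(1::real) \<notin> terminating"
  using terminating_bounds by force+

section \<open>Terminating fractions and dyadic rationals\<close>

definition dyadic :: "real \<Rightarrow> bool" where
  "dyadic t \<longleftrightarrow> (\<exists>k::int. \<exists>N::nat. t * 2^N = of_int k)"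

lemma sum_binary_weight_dyadic:
  assumes "finite F" "\<forall>n\<in>F. n < N"
  shows "\<exists>k::int. (\<Sum>n\<in>F. binary_weight n) * 2^N = of_int k"
  using assms
proof (induction F rule: finite_induct)
  case (insert x F)
  then obtain k :: int where k: "(\<Sum>n\<in>F. binary_weight n) * 2^N = of_int k" by auto
  have "N = (N - Suc x) + Suc x" using insert.prems by simp
  then have "(2::real)^N = 2^(N - Suc x) * 2^Suc x" by (metis power_add)
  then have "binary_weight x * 2^N = 2^(N - Suc x)"
    unfolding binary_weight_def by (simp add: power_divide field_simps)
  moreover have "(\<Sum>n\<in>insert x F. binary_weight n) * 2^N =
      binary_weight x * 2^N + (\<Sum>n\<in>F. binary_weight n) * 2^N"
    using insert by (simp add: algebra_simps)
  ultimately have "(\<Sum>n\<in>insert x F. binary_weight n) * 2^N = of_int (2^(N - Suc x) + k)"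
    using k by simp
  then show ?case by blast
qed (intro exI[of _ 0], simp)

lemma terminating_dyadic: "t \<in> terminating \<Longrightarrow> dyadic t"
proof -
  assume "t \<in> terminating"
  then obtain F where F: "finite F" "t = bsum F" unfolding terminating_def by blast
  obtain N where "\<forall>n\<in>F. n < N" using finite_nat_bounded[OF F(1)] by auto
  then obtain k :: int where "(\<Sum>n\<in>F. binary_weight n) * 2^N = of_int k"
    using sum_binary_weight_dyadic[OF F(1)] by blast
  then have "t * 2^N = of_int k" using F bsum_finite by simp
  then show ?thesis unfolding dyadic_def by blast
qed

lemma dyadic_diff: "dyadic a \<Longrightarrow> dyadic b \<Longrightarrow> dyadic (a - b)"
proof -
  assume "dyadic a" "dyadic b"
  then obtain k l :: int and N M :: nat where kl: "a * 2^N = k" "b * 2^M = l"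
    unfolding dyadic_def by blast
  have "(a - b) * 2^(N + M) = (a * 2^N) * 2^M - (b * 2^M) * 2^N"
    by (simp add: power_add algebra_simps)
  also have "\<dots> = of_int (k * 2^M - l * 2^N)" using kl by simp
  finally show ?thesis unfolding dyadic_def by blast
qed

lemma terminating_diff_non_dyadic: "\<not> dyadic (a - b) \<Longrightarrow> a \<in> terminating \<Longrightarrow> b \<notin> terminating"
  using terminating_dyadic dyadic_diff by blast

lemma not_dyadic_thirds: "\<not> (3::int) dvd m \<Longrightarrow> \<not> dyadic (of_int m / (3 * 2^j))"
proof
  assume "\<not> (3::int) dvd m" "dyadic (of_int m / (3 * 2^j))"
  then obtain k :: int and N where "of_int m / (3 * 2^j) * 2^N = (of_int k :: real)"
    unfolding dyadic_def by blast
  then have "(of_int (m * 2^N) :: real) = of_int (3 * 2^j * k)" by (simp add: field_simps)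
  then have "(3::int) dvd m * 2^N" by (metis dvd_mult2 dvd_triv_left of_int_eq_iff)
  moreover have "coprime (3::int) (2^N)" by simp
  ultimately show False using \<open>\<not> 3 dvd m\<close> by (simp add: coprime_dvd_mult_left_iff)
qed

lemma non_dyadic_values:
  "\<not> dyadic (1/3)" "\<not> dyadic (2/3)" "\<not> dyadic (1/6)" "\<not> dyadic (1/12)"
  using not_dyadic_thirds[of 1 0] not_dyadic_thirds[of 2 0]
    not_dyadic_thirds[of 1 1] not_dyadic_thirds[of 1 2] by simp_all

lemma non_terminating_values:
  "1/3 \<notin> terminating" "2/3 \<notin> terminating" "1/6 \<notin> terminating" "1/12 \<notin> terminating"
  using non_dyadic_values terminating_dyadic by blast+

lemma terminating_add_half: "u \<in> terminating \<Longrightarrow> u < 1/2 \<Longrightarrow> u + 1/2 \<in> terminating"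
proof -
  assume "u \<in> terminating" "u < 1/2"
  then obtain F where F: "finite F" "F \<noteq> {}" "u = bsum F" unfolding terminating_def by blast
  have "0 \<notin> F"
    using bsum_mono[of "{0}" F] bsum_singleton[of 0] F(3) \<open>u < 1/2\<close> by (auto simp: binary_weight_def)
  then have "bsum (insert 0 F) = u + 1/2"
    using bsum_Un_disjoint[of "{0}" F] bsum_singleton[of 0] F(3) by (simp add: binary_weight_def)
  then show ?thesis unfolding terminating_def using F(1) by (auto intro!: exI[of _ "insert 0 F"])
qed

lemma terminating_sub_half: "u \<in> terminating \<Longrightarrow> 1/2 < u \<Longrightarrow> u - 1/2 \<in> terminating"
proof -
  assume "u \<in> terminating" "1/2 < u"
  then obtain F where F: "finite F" "F \<noteq> {}" "u = bsum F" unfolding terminating_def by blast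
  have "0 \<in> F"
  proof (rule ccontr)
    assume "0 \<notin> F"
    then have "F \<subseteq> {0<..}" by (auto intro: gr0I)
    then have "u \<le> binary_weight 0" using bsum_mono bsum_greaterThan[of 0] F(3) by metis
    then show False using \<open>1/2 < u\<close> by (simp add: binary_weight_def)
  qed
  then have split: "u = bsum (F - {0}) + 1/2"
    using bsum_Un_disjoint[of "{0}" "F - {0}"] bsum_singleton[of 0] F(3)
      insert_absorb[OF \<open>0 \<in> F\<close>]
    by (simp add: binary_weight_def)
  moreover have "F - {0} \<noteq> {}"
  proof
    assume "F - {0} = {}"
    then have "bsum (F - {0}) = 0" by (simp only: bsum_empty)
    then show False using split \<open>1/2 < u\<close> by simp
  qed
  ultimately show ?thesis using F(1) unfolding terminating_def by auto
qed

lemma terminating_values: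
  "1/2 \<in> terminating" "1/4 \<in> terminating" "3/4 \<in> terminating" "1/8 \<in> terminating"
  "3/8 \<in> terminating" "5/8 \<in> terminating" "7/8 \<in> terminating"
  by (rule terminating_intro[of "{0}"] terminating_intro[of "{1}"] terminating_intro[of "{0,1}"]
      terminating_intro[of "{2}"] terminating_intro[of "{1,2}"] terminating_intro[of "{0,2}"]
      terminating_intro[of "{0,1,2}"];
      simp add: binary_weight_def power_divide)+

lemmas binary_reps_values = binary_reps_terminating binary_reps_nonterminating binary_reps_outside
  terminating_values zero_one_notin_terminating
  non_terminating_values

section \<open>Sequences with a finite prefix followed by the binary weights\<close>

definition prefixed :: "real list \<Rightarrow> nat \<Rightarrow> real" where
  "prefixed p n = (if n < length p then p ! n else binary_weight (n - length p))"

definition prefix_sum :: "real list \<Rightarrow> nat set \<Rightarrow> real" where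
  "prefix_sum p F = (\<Sum>n\<in>F. p ! n)"

definition prefixed_count :: "real list \<Rightarrow> real \<Rightarrow> nat" where
  "prefixed_count p y = (\<Sum>F\<in>Pow {..<length p}. binary_reps (y - prefix_sum p F))"

definition glue :: "nat \<Rightarrow> nat set \<times> nat set \<Rightarrow> nat set" where
  "glue k = (\<lambda>(F, B). F \<union> (\<lambda>m. m + k) ` B)"

lemma summable_prefixed: "summable (prefixed p)"
proof -
  have "summable (\<lambda>n. prefixed p (n + length p))"
    unfolding prefixed_def using summable_binary_weight by simp
  then show ?thesis by (simp add: summable_iff_shift)
qed

lemma subsum_prefixed:
  "subsum (prefixed p) A = prefix_sum p (A \<inter> {..<length p}) + bsum {m. m + length p \<in> A}"
proof -
  let ?k = "length p"
  define f where "f n = (if n \<in> A then prefixed p n else 0)" for n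
  have shifted: "(\<lambda>n. f (n + ?k)) = (\<lambda>n. if n \<in> {m. m + ?k \<in> A} then binary_weight n else 0)"
    unfolding f_def prefixed_def by auto
  then have "summable f" using summable_bsum_terms by (metis summable_iff_shift)
  then have "subsum (prefixed p) A = (\<Sum>n. f (n + ?k)) + (\<Sum>i<?k. f i)"
    unfolding subsum_def f_def by (rule suminf_split_initial_segment)
  moreover have "(\<Sum>i<?k. f i) = prefix_sum p (A \<inter> {..<?k})"
    unfolding prefix_sum_def f_def prefixed_def by (simp add: sum.inter_restrict[symmetric] Int_commute)
  ultimately show ?thesis unfolding shifted subsum_def by simp
qed

lemma glue_split:
  assumes "F \<subseteq> {..<k}"
  shows "glue k (F, B) \<inter> {..<k} = F" and "{m. m + k \<in> glue k (F, B)} = B"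
  using assms unfolding glue_def by auto

lemma glue_surj: "A = glue k (A \<inter> {..<k}, {m. m + k \<in> A})"
proof -
  have "n \<in> (\<lambda>m. m + k) ` {m. m + k \<in> A}" if "n \<in> A" "\<not> n < k" for n
    using that by (intro image_eqI[where x="n - k"]) auto
  then show ?thesis unfolding glue_def by auto
qed

lemma inj_on_glue: "inj_on (glue k) (Pow {..<k} \<times> UNIV)"
  by (rule inj_onI) (clarsimp, metis glue_split)

lemma subsum_prefixed_fibre:
  "{A. subsum (prefixed p) A = y} =
    glue (length p) ` (SIGMA F:Pow {..<length p}. {B. bsum B = y - prefix_sum p F})"
proof (intro equalityI subsetI)
  fix A assume "A \<in> {A. subsum (prefixed p) A = y}"
  then show "A \<in> glue (length p) ` (SIGMA F:Pow {..<length p}. {B. bsum B = y - prefix_sum p F})"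
    using glue_surj subsum_prefixed[of p A] by (intro image_eqI) auto
qed (auto simp: subsum_prefixed glue_split)

lemma card_subsum_prefixed_fibre:
  "finite {A. subsum (prefixed p) A = y} \<and> card {A. subsum (prefixed p) A = y} = prefixed_count p y"
proof -
  let ?S = "SIGMA F:Pow {..<length p}. {B. bsum B = y - prefix_sum p F}"
  have "inj_on (glue (length p)) ?S" using inj_on_glue by (rule inj_on_subset) auto
  moreover have "finite ?S" using card_bsum_fibre by (intro finite_SigmaI) auto
  moreover have "card ?S = prefixed_count p y"
    unfolding prefixed_count_def using card_bsum_fibre by (subst card_SigmaI) auto
  ultimately show ?thesis unfolding subsum_prefixed_fibre by (simp add: card_image)
qed

lemma prefixed_in_I1:
  fixes N :: "nat set"
  assumes pos: "\<forall>c \<in> set p. c > 0" and "a \<le> b"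
    and support: "\<And>y. 0 < prefixed_count p y \<longleftrightarrow> a \<le> y \<and> y \<le> b"
    and bounded: "\<And>y. a \<le> y \<Longrightarrow> y \<le> b \<Longrightarrow> prefixed_count p y \<in> N"
    and attained: "N \<subseteq> prefixed_count p ` {a..b}"
  shows "Fin ` N \<in> I1"
proof -
  have positive: "\<forall>n. prefixed p n > 0" using pos binary_weight_pos unfolding prefixed_def by auto
  have ach: "achievement_set (prefixed p) = {a..b}"
  proof (intro set_eqI)
    fix y
    have "y \<in> achievement_set (prefixed p) \<longleftrightarrow> {A. subsum (prefixed p) A = y} \<noteq> {}"
      unfolding achievement_set_def by auto
    also have "\<dots> \<longleftrightarrow> 0 < prefixed_count p y"
      using card_subsum_prefixed_fibre[of p y] card_gt_0_iff by metis
    also have "\<dots> \<longleftrightarrow> y \<in> {a..b}" using support by simp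
    finally show "y \<in> achievement_set (prefixed p) \<longleftrightarrow> y \<in> {a..b}" .
  qed
  have "cardinal_function (prefixed p) y = Fin (prefixed_count p y)" for y
    unfolding cardinal_function_def cardval_of_def using card_subsum_prefixed_fibre by simp
  then have "cardinal_function (prefixed p) ` achievement_set (prefixed p) = Fin ` N"
    unfolding ach using bounded attained by (auto simp: image_image)
  then show ?thesis unfolding I1_def using positive summable_prefixed \<open>a \<le> b\<close> ach by blast
qed

lemma prefixed_count_single: "prefixed_count [c] y = binary_reps y + binary_reps (y - c)"
proof -
  have "Pow {..<length [c]} = {{}, {0}}" by (auto simp: lessThan_Suc)
  then show ?thesis unfolding prefixed_count_def prefix_sum_def by simp
qed

lemma prefixed_count_pair:
  "prefixed_count [c, d] y =
    binary_reps y + binary_reps (y - c) + binary_reps (y - d) + binary_reps (y - (c + d))"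
proof -
  have "{..<length [c, d]} = {0, 1}" by auto
  then have "Pow {..<length [c, d]} = {{}, {0}, {1}, {0, 1}}" by (simp add: Pow_insert insert_commute)
  then show ?thesis unfolding prefixed_count_def prefix_sum_def by simp
qed

section \<open>The five examples\<close>

lemma range_1_to_3: "Fin ` {1, 2, 3} \<in> I1"
proof (rule prefixed_in_I1[where p="[1/3]" and a=0 and b="4/3"])
  let ?r = binary_reps
  fix y :: real
  show "0 < prefixed_count [1/3] y \<longleftrightarrow> 0 \<le> y \<and> y \<le> 4/3"
    unfolding prefixed_count_single using binary_reps_pos_iff[of y] binary_reps_pos_iff[of "y - 1/3"] by auto
  assume "0 \<le> y" "y \<le> 4/3"
  then have "1 \<le> ?r y \<or> 1 \<le> ?r (y - 1/3)"
    using binary_reps_ge_1[of y] binary_reps_ge_1[of "y - 1/3"] by linarith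
  moreover have "?r y \<le> 1 \<or> ?r (y - 1/3) \<le> 1"
    using terminating_diff_non_dyadic[of y "y - 1/3"] non_dyadic_values(1)
      binary_reps_le_1[of y] binary_reps_le_1[of "y - 1/3"] by auto
  ultimately show "prefixed_count [1/3] y \<in> {1, 2, 3}"
    unfolding prefixed_count_single using binary_reps_le_2[of y] binary_reps_le_2[of "y - 1/3"] by auto
next
  show "{1, 2, 3} \<subseteq> prefixed_count [1/3] ` {0..4/3}"
    using image_eqI[of 1 "prefixed_count [1/3]" 0] image_eqI[of 2 "prefixed_count [1/3]" "1/3"]
      image_eqI[of 3 "prefixed_count [1/3]" "1/2"]
    by (simp add: prefixed_count_single binary_reps_values)
qed simp_all

lemma range_1_to_4: "Fin ` {1, 2, 3, 4} \<in> I1"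
proof (rule prefixed_in_I1[where p="[1/2]" and a=0 and b="3/2"])
  fix y :: real
  show "0 < prefixed_count [1/2] y \<longleftrightarrow> 0 \<le> y \<and> y \<le> 3/2"
    unfolding prefixed_count_single using binary_reps_pos_iff[of y] binary_reps_pos_iff[of "y - 1/2"] by auto
  assume "0 \<le> y" "y \<le> 3/2"
  then have "1 \<le> binary_reps y \<or> 1 \<le> binary_reps (y - 1/2)"
    using binary_reps_ge_1[of y] binary_reps_ge_1[of "y - 1/2"] by linarith
  then show "prefixed_count [1/2] y \<in> {1, 2, 3, 4}"
    unfolding prefixed_count_single using binary_reps_le_2[of y] binary_reps_le_2[of "y - 1/2"] by auto
next
  show "{1, 2, 3, 4} \<subseteq> prefixed_count [1/2] ` {0..3/2}"
    using image_eqI[of 1 "prefixed_count [1/2]" 0] image_eqI[of 2 "prefixed_count [1/2]" "1/4"]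
      image_eqI[of 3 "prefixed_count [1/2]" "1/2"] image_eqI[of 4 "prefixed_count [1/2]" "3/4"]
    by (simp add: prefixed_count_single binary_reps_values)
qed simp_all

text \<open>
  The count \<open>6\<close> would need \<open>y - 2/3\<close> to be terminating together with \<open>y\<close> or \<open>y - 1/2\<close>,
  which differ from it by the non-dyadic numbers \<open>2/3\<close> and \<open>1/6\<close>.
\<close>

lemma range_1_to_5: "Fin ` {1, 2, 3, 4, 5} \<in> I1"
proof (rule prefixed_in_I1[where p="[1/2, 2/3]" and a=0 and b="13/6"])
  let ?r = binary_reps
  fix y :: real
  have count: "prefixed_count [1/2, 2/3] y = ?r y + ?r (y - 1/2) + ?r (y - 2/3) + ?r (y - 7/6)"
    unfolding prefixed_count_pair by simp
  show "0 < prefixed_count [1/2, 2/3] y \<longleftrightarrow> 0 \<le> y \<and> y \<le> 13/6"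
    unfolding count using binary_reps_pos_iff[of y] binary_reps_pos_iff[of "y - 1/2"]
      binary_reps_pos_iff[of "y - 2/3"] binary_reps_pos_iff[of "y - 7/6"] by auto
  assume "0 \<le> y" "y \<le> 13/6"
  then have "1 \<le> ?r y \<or> 1 \<le> ?r (y - 1/2) \<or> 1 \<le> ?r (y - 7/6)"
    using binary_reps_ge_1[of y] binary_reps_ge_1[of "y - 1/2"] binary_reps_ge_1[of "y - 7/6"] by linarith
  then have lower: "1 \<le> prefixed_count [1/2, 2/3] y" unfolding count by (elim disjE; linarith)
  have "?r y = 0 \<or> ?r (y - 7/6) = 0"
    using binary_reps_outside[of y] binary_reps_outside[of "y - 7/6"] by linarith
  then have outer: "?r y + ?r (y - 7/6) \<le> 2"
    using binary_reps_le_2[of y] binary_reps_le_2[of "y - 7/6"] by auto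
  have "prefixed_count [1/2, 2/3] y \<le> 5"
  proof (cases "y - 2/3 \<in> terminating")
    case True
    then have "y \<notin> terminating" "y - 1/2 \<notin> terminating"
      using terminating_diff_non_dyadic[of y "y - 2/3"] terminating_diff_non_dyadic[of "y - 1/2" "y - 2/3"]
        non_dyadic_values(2,3) by auto
    then show ?thesis
      unfolding count using outer binary_reps_le_1 binary_reps_le_2[of "y - 2/3"] by fastforce
  next
    case False
    then show ?thesis
      unfolding count using outer binary_reps_le_1[OF False] binary_reps_le_2[of "y - 1/2"] by linarith
  qed
  with lower show "prefixed_count [1/2, 2/3] y \<in> {1, 2, 3, 4, 5}" by auto
next
  let ?f = "prefixed_count [1/2, 2/3]"
  show "{1, 2, 3, 4, 5} \<subseteq> ?f ` {0..13/6}"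
    using image_eqI[of 1 ?f 0] image_eqI[of 2 ?f "1/4"] image_eqI[of 3 ?f "1/2"]
      image_eqI[of 4 ?f 1] image_eqI[of 5 ?f "3/4"]
    by (simp add: prefixed_count_pair binary_reps_values)
qed simp_all

text \<open>
  Here \<open>y - 1/2\<close> is counted twice, and adding or removing the leading digit \<open>1/2\<close> shows
  that whenever it is terminating, so is whichever of \<open>y\<close>, \<open>y - 1\<close> lies in \<open>(0,1)\<close>.
  This rules out the count \<open>5\<close>.
\<close>

lemma range_1_to_4_and_6: "Fin ` {1, 2, 3, 4, 6} \<in> I1"
proof (rule prefixed_in_I1[where p="[1/2, 1/2]" and a=0 and b=2])
  let ?r = binary_reps
  fix y :: real
  have count: "prefixed_count [1/2, 1/2] y = ?r y + 2 * ?r (y - 1/2) + ?r (y - 1)"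
    unfolding prefixed_count_pair by simp
  show "0 < prefixed_count [1/2, 1/2] y \<longleftrightarrow> 0 \<le> y \<and> y \<le> 2"
    unfolding count using binary_reps_pos_iff[of y] binary_reps_pos_iff[of "y - 1/2"]
      binary_reps_pos_iff[of "y - 1"] by auto
  assume "0 \<le> y" "y \<le> 2"
  then have outer_pos: "1 \<le> ?r y + ?r (y - 1)"
    using binary_reps_ge_1[of y] binary_reps_ge_1[of "y - 1"] by linarith
  consider "y < 1" | "y = 1" | "1 < y" by linarith
  note position = this
  have outer: "?r y + ?r (y - 1) \<le> 2"
  proof (cases rule: position)
    case 2
    then show ?thesis by (simp add: binary_reps_values)
  qed (use binary_reps_outside[of y] binary_reps_outside[of "y - 1"] binary_reps_le_2 in auto)
  show "prefixed_count [1/2, 1/2] y \<in> {1, 2, 3, 4, 6}"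
  proof (cases "y - 1/2 \<in> terminating")
    case middle: True
    have "?r y + ?r (y - 1) = 2"
    proof (cases rule: position)
      case 1
      then have "y \<in> terminating" using terminating_add_half[OF middle] by simp
      with 1 show ?thesis using binary_reps_outside[of "y - 1"] binary_reps_terminating by simp
    next
      case 2
      then show ?thesis by (simp add: binary_reps_values)
    next
      case 3
      then have "y - 1 \<in> terminating" using terminating_sub_half[OF middle] by simp
      with 3 show ?thesis using binary_reps_outside[of y] binary_reps_terminating by simp
    qed
    then show ?thesis unfolding count using binary_reps_terminating[OF middle] by simp
  next
    case False
    then have "prefixed_count [1/2, 1/2] y \<le> 4"
      unfolding count using outer binary_reps_le_1[OF False] by linarith
    with outer_pos show ?thesis unfolding count by auto
  qed
next
  let ?f = "prefixed_count [1/2, 1/2]"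
  show "{1, 2, 3, 4, 6} \<subseteq> ?f ` {0..2}"
    using image_eqI[of 1 ?f 0] image_eqI[of 2 ?f "1/4"] image_eqI[of 3 ?f "2/3"]
      image_eqI[of 4 ?f "1/2"] image_eqI[of 6 ?f "3/4"]
    by (simp add: prefixed_count_pair binary_reps_values)
qed simp_all

lemma range_1_to_6: "Fin ` {1, 2, 3, 4, 5, 6} \<in> I1"
proof (rule prefixed_in_I1[where p="[3/4, 1/2]" and a=0 and b="9/4"])
  let ?r = binary_reps
  fix y :: real
  have count: "prefixed_count [3/4, 1/2] y = ?r y + ?r (y - 3/4) + ?r (y - 1/2) + ?r (y - 5/4)"
    unfolding prefixed_count_pair by simp
  show "0 < prefixed_count [3/4, 1/2] y \<longleftrightarrow> 0 \<le> y \<and> y \<le> 9/4"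
    unfolding count using binary_reps_pos_iff[of y] binary_reps_pos_iff[of "y - 3/4"]
      binary_reps_pos_iff[of "y - 1/2"] binary_reps_pos_iff[of "y - 5/4"] by auto
  assume "0 \<le> y" "y \<le> 9/4"
  then have "1 \<le> ?r y \<or> 1 \<le> ?r (y - 1/2) \<or> 1 \<le> ?r (y - 5/4)"
    using binary_reps_ge_1[of y] binary_reps_ge_1[of "y - 1/2"] binary_reps_ge_1[of "y - 5/4"] by linarith
  then have lower: "1 \<le> prefixed_count [3/4, 1/2] y" unfolding count by (elim disjE; linarith)
  have "?r y = 0 \<or> ?r (y - 5/4) = 0"
    using binary_reps_outside[of y] binary_reps_outside[of "y - 5/4"] by linarith
  then have "?r y + ?r (y - 5/4) \<le> 2"
    using binary_reps_le_2[of y] binary_reps_le_2[of "y - 5/4"] by auto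
  then have "prefixed_count [3/4, 1/2] y \<le> 6"
    unfolding count using binary_reps_le_2[of "y - 3/4"] binary_reps_le_2[of "y - 1/2"] by linarith
  with lower show "prefixed_count [3/4, 1/2] y \<in> {1, 2, 3, 4, 5, 6}" by auto
next
  let ?f = "prefixed_count [3/4, 1/2]"
  show "{1, 2, 3, 4, 5, 6} \<subseteq> ?f ` {0..9/4}"
    using image_eqI[of 1 ?f 0] image_eqI[of 2 ?f "1/4"] image_eqI[of 3 ?f "1/2"]
      image_eqI[of 4 ?f "5/8"] image_eqI[of 5 ?f 1] image_eqI[of 6 ?f "7/8"]
    by (simp add: prefixed_count_pair binary_reps_values)
qed simp_all

theorem proposition7p2:
  shows "{Fin 1, Fin 2, Fin 3} \<in> I1 \<and>
    {Fin 1, Fin 2, Fin 3, Fin 4} \<in> I1 \<and>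
    {Fin 1, Fin 2, Fin 3, Fin 4, Fin 5} \<in> I1 \<and>
    {Fin 1, Fin 2, Fin 3, Fin 4, Fin 6} \<in> I1 \<and>
    {Fin 1, Fin 2, Fin 3, Fin 4, Fin 5, Fin 6} \<in> I1"
  using range_1_to_3 range_1_to_4 range_1_to_5 range_1_to_4_and_6 range_1_to_6 by simp

end
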